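(* Let $X=S^1=\mathbb R/\mathbb Z$ with the arc-length metric, let $T x=2x \bmod 1$ be the doubling map, let $N=3$ and consider the rigid interaction $\gamma=0$. Then for every sufficiently small $\varepsilon>0$ the CML $T_\varepsilon$ exhibits desynchronization on a set of initial configurations of positive Lebesgue measure in $(S^1)^3$ (containing a nonempty open set).
   Context: For $\bar x=(x_1,x_2,x_3)$, $J_i(\bar x)=\{j:\rho(x_i,x_j)\le\varepsilon\}$, $(\bar Q_\varepsilon\bar x)_i=\frac1{|J_i(\bar x)|}\sum_{j\in J_i(\bar x)}x_j$ (center of gravity, computed in a local lift since particles are close), and $T_\varepsilon=\bar T\circ\bar Q_\varepsilon$ with $\bar T(\bar x)=(Tx_1,Tx_2,Tx_3)$. Writing $\bar x^t=T^t_\varepsilon\bar x$, desynchronization for $\bar x$ means $\liminf_{t\to\infty}\max_{i,j}\rho(x_i^t,x_j^t)>0$. *)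

theory Defs
  imports "HOL-Analysis.Analysis" "HOL-Library.Numeral_Type"
begin

text \<open>Points of S^1 = R/Z are represented by real lifts; configurations of N = 3
  particles by vectors in real^3 (index type 3), read modulo Z^3.\<close>

definition circ_dist :: "real \<Rightarrow> real \<Rightarrow> real" where
  "circ_dist x y = min (frac (x - y)) (1 - frac (x - y))"

definition doubling :: "real \<Rightarrow> real" where
  "doubling x = frac (2 * x)"

definition sdisp :: "real \<Rightarrow> real \<Rightarrow> real" where
  "sdisp a b = (b - a) - of_int (round (b - a))"

definition Jset :: "real \<Rightarrow> real^3 \<Rightarrow> 3 \<Rightarrow> 3 set" where
  "Jset \<epsilon> x i = {j. circ_dist (x $ i) (x $ j) \<le> \<epsilon>}"

text \<open>Rigid (gamma = 0) interaction: centre of gravity of the particles within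
  distance epsilon, computed in the local lift around x_i.\<close>
definition Qbar :: "real \<Rightarrow> real^3 \<Rightarrow> real^3" where
  "Qbar \<epsilon> x = (\<chi> i. x $ i + (\<Sum>j\<in>Jset \<epsilon> x i. sdisp (x $ i) (x $ j)) / real (card (Jset \<epsilon> x i)))"

definition CML :: "real \<Rightarrow> real^3 \<Rightarrow> real^3" where
  "CML \<epsilon> x = (\<chi> i. doubling (Qbar \<epsilon> x $ i))"

definition max_spread :: "real^3 \<Rightarrow> real" where
  "max_spread x = Max ((\<lambda>(i, j). circ_dist (x $ i) (x $ j)) ` (UNIV :: (3 \<times> 3) set))"

definition desynchronizes :: "real \<Rightarrow> real^3 \<Rightarrow> bool" where
  "desynchronizes \<epsilon> x \<longleftrightarrow> liminf (\<lambda>t. ereal (max_spread ((CML \<epsilon> ^^ t) x))) > 0"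

end

theory Submission imports Defs begin

(* Call a configuration a chain if, going around the circle,
   particle 2 lies at distance u and particle 3 at a further distance v,
   with 0 < u, v < eps < u + v: particle 2 interacts with both others, but
   particles 1 and 3 do not interact with each other.  For such x the
   interaction sets are {1,2}, {1,2,3}, {2,3}, so the rigid averaging moves
   the particles by u/2, (v - u)/3, -v/2, and after doubling the new gaps are
   (u + 2v)/3 and (2u + v)/3.  These again satisfy the chain conditions, so
   chains are invariant under the coupled map, while the spread of a chain is
   u + v > eps.  Hence every chain desynchronizes, and chains contain an open
   ball around the configuration (0, 3eps/4, 3eps/2) whenever eps < 1/8.
   The file first computes circle distances and signed displacements from
   explicit lifts, then the one-step gap dynamics, the invariance, the
   desynchronization criterion and the open set, and finally the theorem. *)

lemma circ_dist_lift:
  assumes "x - y - d = of_int k" "\<bar>d\<bar> \<le> 1/2"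
  shows "circ_dist x y = \<bar>d\<bar>"
proof (cases "d \<ge> 0")
  case True
  then have "frac (x - y) = d" unfolding frac_unique_iff using assms by simp
  then show ?thesis using assms True unfolding circ_dist_def by (simp add: min_def)
next
  case False
  then have "frac (x - y) = 1 + d" unfolding frac_unique_iff using assms
    by (auto simp: algebra_simps)
  then show ?thesis using assms False unfolding circ_dist_def by (simp add: min_def)
qed

lemma sdisp_lift:
  assumes "b - a - d = of_int k" "\<bar>d\<bar> < 1/2"
  shows "sdisp a b = d"
proof -
  have "round (b - a) = k"
    using assms by (simp add: round_def floor_eq_iff algebra_simps) linarith
  then show ?thesis using assms unfolding sdisp_def by simp
qed

lemma sdisp_representative: "\<exists>k. b - a = sdisp a b + of_int k"
  unfolding sdisp_def by (rule exI[of _ "round (b - a)"]) simp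

lemma doubling_representative: "\<exists>m. doubling y = 2 * y + of_int m"
  unfolding doubling_def frac_def by (rule exI[of _ "- floor (2 * y)"]) simp

definition chain :: "real \<Rightarrow> real^3 \<Rightarrow> bool" where
  "chain \<epsilon> x \<longleftrightarrow> 0 < sdisp (x$1) (x$2) \<and> sdisp (x$1) (x$2) < \<epsilon> \<and>
     0 < sdisp (x$2) (x$3) \<and> sdisp (x$2) (x$3) < \<epsilon> \<and>
     \<epsilon> < sdisp (x$1) (x$2) + sdisp (x$2) (x$3)"

lemma three_points_geometry:
  fixes x :: "real^3"
  assumes k1: "x$2 - x$1 = u + of_int k1" and k2: "x$3 - x$2 = v + of_int k2"
    and uv: "0 \<le> u" "0 \<le> v" "u + v < 1/2"
  shows "circ_dist (x$i) (x$i) = 0"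
    and "circ_dist (x$1) (x$2) = u" "circ_dist (x$2) (x$1) = u"
    and "circ_dist (x$2) (x$3) = v" "circ_dist (x$3) (x$2) = v"
    and "circ_dist (x$1) (x$3) = u + v" "circ_dist (x$3) (x$1) = u + v"
    and "sdisp (x$i) (x$i) = 0"
    and "sdisp (x$2) (x$1) = - u" "sdisp (x$3) (x$2) = - v"
  using circ_dist_lift[of "x$i" "x$i" 0 0] sdisp_lift[of "x$i" "x$i" 0 0]
    circ_dist_lift[of "x$1" "x$2" "-u" "-k1"] circ_dist_lift[of "x$2" "x$1" u k1]
    circ_dist_lift[of "x$2" "x$3" "-v" "-k2"] circ_dist_lift[of "x$3" "x$2" v k2]
    circ_dist_lift[of "x$1" "x$3" "-(u+v)" "-k1-k2"]
    circ_dist_lift[of "x$3" "x$1" "u+v" "k1+k2"]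
    sdisp_lift[of "x$1" "x$2" "-u" "-k1"] sdisp_lift[of "x$2" "x$3" "-v" "-k2"]
    k1 k2 uv by auto

text \<open>One step of the coupled map on a chain with gaps \<open>u\<close>, \<open>v\<close>: particle 2
  sees everybody, particles 1 and 3 only see particle 2, and the new gaps are
  \<open>(u + 2v)/3\<close> and \<open>(2u + v)/3\<close>.\<close>
lemma chain_step_gaps:
  assumes e: "0 < \<epsilon>" "\<epsilon> < 1/8" and C: "chain \<epsilon> x"
  defines "u \<equiv> sdisp (x$1) (x$2)" and "v \<equiv> sdisp (x$2) (x$3)"
  shows "sdisp (CML \<epsilon> x $ 1) (CML \<epsilon> x $ 2) = (u + 2 * v) / 3"
    and "sdisp (CML \<epsilon> x $ 2) (CML \<epsilon> x $ 3) = (2 * u + v) / 3"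
proof -
  have uv: "0 < u" "u < \<epsilon>" "0 < v" "v < \<epsilon>" "\<epsilon> < u + v"
    using C unfolding chain_def u_def v_def by auto
  obtain k1 where k1: "x$2 - x$1 = u + of_int k1" using sdisp_representative u_def by blast
  obtain k2 where k2: "x$3 - x$2 = v + of_int k2" using sdisp_representative v_def by blast
  have "u + v < 1/2" using uv e by simp
  note geo = three_points_geometry[OF k1 k2 less_imp_le[OF uv(1)] less_imp_le[OF uv(3)] this]
  have J1: "Jset \<epsilon> x 1 = {1,2}" and J2: "Jset \<epsilon> x 2 = {1,2,3}"
    and J3: "Jset \<epsilon> x 3 = {2,3}"
    unfolding Jset_def set_eq_iff mem_Collect_eq forall_3 using geo uv by simp_all
  have Q: "Qbar \<epsilon> x $ 1 = x$1 + u/2" "Qbar \<epsilon> x $ 2 = x$2 + (v - u)/3"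
    "Qbar \<epsilon> x $ 3 = x$3 - v/2"
    using geo by (simp_all add: Qbar_def J1 J2 J3 u_def[symmetric] v_def[symmetric])
  have CML_lift: "\<exists>m. CML \<epsilon> x $ i = 2 * (Qbar \<epsilon> x $ i) + of_int m" for i
    unfolding CML_def by (simp add: doubling_representative)
  obtain m1 m2 m3 where m: "CML \<epsilon> x $ 1 = 2 * (x$1 + u/2) + of_int m1"
    "CML \<epsilon> x $ 2 = 2 * (x$2 + (v - u)/3) + of_int m2"
    "CML \<epsilon> x $ 3 = 2 * (x$3 - v/2) + of_int m3"
    using CML_lift[of 1] CML_lift[of 2] CML_lift[of 3] unfolding Q by blast
  show "sdisp (CML \<epsilon> x $ 1) (CML \<epsilon> x $ 2) = (u + 2 * v) / 3"
    by (rule sdisp_lift[where k="m2 - m1 + 2*k1"]) (use m k1 uv e in \<open>auto simp: field_simps\<close>)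
  show "sdisp (CML \<epsilon> x $ 2) (CML \<epsilon> x $ 3) = (2 * u + v) / 3"
    by (rule sdisp_lift[where k="m3 - m2 + 2*k2"]) (use m k2 uv e in \<open>auto simp: field_simps\<close>)
qed

text \<open>Chains are forward invariant: the new gaps are convex combinations of
  \<open>u, v \<in> (0, \<epsilon>)\<close> and still sum to \<open>u + v > \<epsilon>\<close>.\<close>
lemma chain_invariant:
  assumes "0 < \<epsilon>" "\<epsilon> < 1/8" and "chain \<epsilon> x"
  shows "chain \<epsilon> (CML \<epsilon> x)"
  using assms(3) unfolding chain_def chain_step_gaps[OF assms]
  by (auto simp: field_simps)

lemma chain_spread:
  assumes "\<epsilon> < 1/8" and C: "chain \<epsilon> x"
  shows "\<epsilon> < max_spread x"
proof -
  define u where "u = sdisp (x$1) (x$2)"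
  define v where "v = sdisp (x$2) (x$3)"
  have uv: "0 < u" "u < \<epsilon>" "0 < v" "v < \<epsilon>" "\<epsilon> < u + v"
    using C unfolding chain_def u_def v_def by auto
  obtain k1 where k1: "x$2 - x$1 = u + of_int k1" using sdisp_representative u_def by blast
  obtain k2 where k2: "x$3 - x$2 = v + of_int k2" using sdisp_representative v_def by blast
  have "circ_dist (x$1) (x$3) = u + v"
    using three_points_geometry(6)[OF k1 k2] uv assms(1) by simp
  moreover have "circ_dist (x$1) (x$3) \<le> max_spread x"
    unfolding max_spread_def by (rule Max_ge) (auto intro!: image_eqI[where x="(1,3)"])
  ultimately show ?thesis using uv by simp
qed

lemma desynchronizes_if_spread_bounded:
  assumes "0 < \<delta>" and "\<And>t. \<delta> \<le> max_spread ((CML \<epsilon> ^^ t) x)"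
  shows "desynchronizes \<epsilon> x"
proof -
  have "ereal \<delta> \<le> liminf (\<lambda>t. ereal (max_spread ((CML \<epsilon> ^^ t) x)))"
    by (rule Liminf_bounded) (use assms(2) in \<open>auto intro: always_eventually\<close>)
  then show ?thesis
    unfolding desynchronizes_def using assms(1) by (meson ereal_less(2) less_le_trans)
qed

lemma chain_desynchronizes:
  assumes e: "0 < \<epsilon>" "\<epsilon> < 1/8" and "chain \<epsilon> x"
  shows "desynchronizes \<epsilon> x"
proof (rule desynchronizes_if_spread_bounded[OF e(1)])
  fix t
  have "chain \<epsilon> ((CML \<epsilon> ^^ t) x)"
    by (induction t) (use assms chain_invariant[OF e] in auto)
  then show "\<epsilon> \<le> max_spread ((CML \<epsilon> ^^ t) x)"
    using chain_spread e(2) by (simp add: less_imp_le)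
qed

lemma ball_of_chains:
  assumes e: "0 < \<epsilon>" "\<epsilon> < 1/8"
    and x: "x \<in> ball (vector [0, 3*\<epsilon>/4, 3*\<epsilon>/2]) (\<epsilon>/16)"
  shows "chain \<epsilon> x"
proof -
  define c :: "real^3" where "c = vector [0, 3*\<epsilon>/4, 3*\<epsilon>/2]"
  have close: "\<bar>x$i - c$i\<bar> < \<epsilon>/16" for i
  proof -
    have "\<bar>(x - c)$i\<bar> \<le> norm (x - c)" by (rule component_le_norm_cart)
    also have "\<dots> < \<epsilon>/16" using x by (simp add: c_def dist_norm norm_minus_commute)
    finally show ?thesis by simp
  qed
  have d1: "\<bar>x$1\<bar> < \<epsilon>/16" and d2: "\<bar>x$2 - 3*\<epsilon>/4\<bar> < \<epsilon>/16"
    and d3: "\<bar>x$3 - 3*\<epsilon>/2\<bar> < \<epsilon>/16"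
    using close[of 1] close[of 2] close[of 3] by (simp_all add: c_def)
  have "sdisp (x$1) (x$2) = x$2 - x$1"
    using d1 d2 e by (intro sdisp_lift[where k=0]) (simp, arith)
  moreover have "sdisp (x$2) (x$3) = x$3 - x$2"
    using d3 d2 e by (intro sdisp_lift[where k=0]) (simp, arith)
  ultimately show ?thesis using d1 d2 d3 e unfolding chain_def by arith
qed

theorem lemma3:
  shows "\<exists>\<epsilon>0>0. \<forall>\<epsilon>. 0 < \<epsilon> \<and> \<epsilon> < \<epsilon>0 \<longrightarrow>
           (\<exists>U :: (real^3) set. open U \<and> U \<noteq> {} \<and> (\<forall>x\<in>U. desynchronizes \<epsilon> x))"
proof (intro exI[of _ "1/8"] conjI allI impI)
  fix \<epsilon> :: real assume "0 < \<epsilon> \<and> \<epsilon> < 1/8"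
  then have e: "0 < \<epsilon>" "\<epsilon> < 1/8" by auto
  let ?U = "ball (vector [0, 3*\<epsilon>/4, 3*\<epsilon>/2] :: real^3) (\<epsilon>/16)"
  have "\<forall>x\<in>?U. desynchronizes \<epsilon> x"
    using chain_desynchronizes[OF e] ball_of_chains[OF e] by blast
  moreover have "?U \<noteq> {}" using e by simp
  ultimately show "\<exists>U :: (real^3) set. open U \<and> U \<noteq> {} \<and> (\<forall>x\<in>U. desynchronizes \<epsilon> x)"
    by (intro exI[of _ ?U]) simp
qed simp

end
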